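(* Let $m,n\in\mathbb N$ and let $A=(\alpha_{ij})$ be a real $m\times n$ matrix with $\operatorname{rank}(A)=n$. Let $\beta\in\mathbb R_m$, $\varepsilon\ge 0$ and $F\in S(A,\beta,\varepsilon)$. Let $y\in\mathbb R_n$ and $\delta\ge0$ with $\|Ay^T-\beta^T\|_\infty\le\delta$. Put $C:=F(1,\dots,1)$ and $D:=(A^T)^{\dagger}$, and fix $K>1$. Then for every $v=(v_1,\dots,v_n)\in\mathbb R_n^+$ with $K^{-1}\le v_i\le K$ for all $i=1,\dots,n$, $$|F(v)-Cv^y|\le |F(v)|\big((1+\varepsilon)K^{m\delta\|D\|}-1\big).$$
   Context: $\mathbb R^m$ denotes real column vectors of length $m$, $\mathbb R_m$ real row vectors of length $m$; $\mathbb R_m^+$ (resp. $\mathbb R_n^+$) denotes the row vectors with all entries strictly positive. For $c=(c_1,\dots,c_m)\in\mathbb R_m^+$ and $\alpha=(\alpha_1,\dots,\alpha_m)\in\mathbb R_m$, $c^\alpha:=\prod_{i=1}^m c_i^{\alpha_i}$ (similarly $v^y=\prod_j v_j^{y_j}$ for $v\in\mathbb R_n^+$, $y\in\mathbb R_n$). For a real $m\times n$ matrix $A$ with columns $\alpha_1^T,\dots,\alpha_n^T$ (so $\alpha_j\in\mathbb R_m$), $\beta\in\mathbb R_m$ and $\varepsilon\ge0$, $S(A,\beta,\varepsilon)$ is the set of all functions $F:\mathbb R_n^+\to\mathbb R$ such that $$|F(v_1c^{\alpha_1},\dots,v_nc^{\alpha_n})-F(v_1,\dots,v_n)c^\beta|\le\varepsilon|F(v_1,\dots,v_n)|c^\beta$$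 for all $v_1,\dots,v_n>0$ and all $c\in\mathbb R_m^+$. $B^\dagger$ denotes the Moore–Penrose pseudoinverse of a real matrix $B$. $\|\cdot\|_\infty$ is the maximum norm on $\mathbb R^n$, $\mathbb R^m$, and for a matrix $B=(b_{ij})$, $\|B\|=\max_i\sum_j|b_{ij}|$ is the induced operator norm. *)

theory Defs
  imports "HOL-Analysis.Analysis"
begin

text \<open>Vectors in R_m are modelled as real^'m, an m x n matrix as real^'n^'m
  (rows indexed by 'm, columns by 'n).  Row j-th column of A: (\<chi> i. A$i$j).\<close>

definition mp_pinv :: "real^'n^'m \<Rightarrow> real^'m^'n" where
  "mp_pinv B = (THE X. B ** X ** B = B \<and> X ** B ** X = X \<and>
                 transpose (B ** X) = B ** X \<and> transpose (X ** B) = X ** B)"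

definition vpow :: "real^'m \<Rightarrow> real^'m \<Rightarrow> real" where
  "vpow c a = (\<Prod>i\<in>UNIV. (c $ i) powr (a $ i))"

definition pos_vec :: "real^'n \<Rightarrow> bool" where
  "pos_vec v \<longleftrightarrow> (\<forall>i. v $ i > 0)"

definition max_norm :: "real^'m \<Rightarrow> real" where
  "max_norm x = Max (range (\<lambda>i. \<bar>x $ i\<bar>))"

definition row_sum_norm :: "real^'n^'m \<Rightarrow> real" where
  "row_sum_norm B = Max (range (\<lambda>i. \<Sum>j\<in>UNIV. \<bar>B $ i $ j\<bar>))"

definition S_class :: "real^'n^'m \<Rightarrow> real^'m \<Rightarrow> real \<Rightarrow> (real^'n \<Rightarrow> real) set" where
  "S_class A \<beta> \<epsilon> = {F. \<forall>v c. pos_vec v \<longrightarrow> pos_vec c \<longrightarrow>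
      \<bar>F (\<chi> j. v $ j * vpow c (\<chi> i. A $ i $ j)) - F v * vpow c \<beta>\<bar>
        \<le> \<epsilon> * \<bar>F v\<bar> * vpow c \<beta>}"

end

theory Submission
  imports Defs
begin

text \<open>Put \<open>w = D ln v\<close>. Since \<open>A\<^sup>T D = I\<close> for \<open>A\<close> of full column rank, the point
  \<open>c = e\<^sup>-\<^sup>w\<close> rescales \<open>v\<close> to \<open>(1,\<dots>,1)\<close>, so membership in \<open>S(A,\<beta>,\<epsilon>)\<close> gives
  \<open>|C e\<^sup>\<beta>\<^sup>\<cdot>\<^sup>w - F(v)| \<le> \<epsilon>|F(v)|\<close>. On the other hand \<open>v\<^sup>y = e\<^sup>A\<^sup>y\<^sup>\<cdot>\<^sup>w\<close>, and the exponents differ by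
  \<open>(\<beta> - Ay)\<cdot>w\<close>, which is at most \<open>m \<delta> \<parallel>D\<parallel> ln K\<close> because \<open>|ln v\<^sub>i| \<le> ln K\<close>.\<close>

lemma penrose_equations_unique:
  fixes B :: "real^'m^'n" and X Y :: "real^'n^'m"
  assumes "B ** X ** B = B" "X ** B ** X = X" "transpose (B ** X) = B ** X" "transpose (X ** B) = X ** B"
   and "B ** Y ** B = B" "Y ** B ** Y = Y" "transpose (B ** Y) = B ** Y" "transpose (Y ** B) = Y ** B"
  shows "X = Y"
proof -
  have "X = X ** transpose (B ** X)" using assms(2,3) by (simp add: matrix_mul_assoc)
  also have "\<dots> = X ** (transpose X ** (transpose B ** transpose (B ** Y)))"
    using assms(5) by (metis matrix_transpose_mul)
  also have "\<dots> = X ** (transpose (B ** X) ** (B ** Y))"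
    using assms(7) by (simp add: matrix_transpose_mul matrix_mul_assoc)
  also have "\<dots> = (X ** B ** X) ** B ** Y" using assms(3) by (simp add: matrix_mul_assoc)
  finally have X: "X = X ** B ** Y" using assms(2) by simp
  have "Y = transpose (Y ** B) ** Y" using assms(6,8) by simp
  also have "\<dots> = (transpose (B ** (X ** B)) ** transpose Y) ** Y"
    using assms(1) by (simp add: matrix_transpose_mul matrix_mul_assoc)
  also have "\<dots> = (X ** B) ** transpose (Y ** B) ** Y"
    using assms(4) by (simp add: matrix_transpose_mul matrix_mul_assoc)
  also have "\<dots> = X ** B ** Y" using assms(8,6) by (metis matrix_mul_assoc)
  finally show ?thesis using X by simp
qed

lemma mp_pinv_eqI:
  fixes B :: "real^'m^'n" and X :: "real^'n^'m"
  assumes "B ** X ** B = B" "X ** B ** X = X" "transpose (B ** X) = B ** X" "transpose (X ** B) = X ** B"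
  shows "mp_pinv B = X"
  unfolding mp_pinv_def using assms penrose_equations_unique[of B _ X] by (intro the_equality) blast+

lemma full_column_rank_gram_invertible:
  fixes A :: "real^'n^'m"
  assumes "rank A = CARD('n)"
  shows "invertible (transpose A ** A)"
proof -
  have "x = 0" if "(transpose A ** A) *v x = 0" for x
  proof -
    from that have "inner (A *v x) (A *v x) = 0"
      by (simp add: matrix_vector_mul_assoc[symmetric] dot_lmul_matrix[symmetric])
    then show "x = 0"
      using assms full_rank_injective by (metis inner_eq_zero_iff injD matrix_vector_mult_0_right)
  qed
  then show ?thesis using invertible_left_inverse matrix_left_invertible_ker by blast
qed

lemma mp_pinv_transpose_right_inverse:
  fixes A :: "real^'n^'m"
  assumes "rank A = CARD('n)"
  shows "transpose A ** mp_pinv (transpose A) = mat 1"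
proof -
  define G where "G = transpose A ** A"
  obtain N where NG: "N ** G = mat 1" and GN: "G ** N = mat 1"
    using full_column_rank_gram_invertible[OF assms] unfolding G_def invertible_def by blast
  have "transpose N = N"
    using NG GN unfolding G_def
    by (metis matrix_transpose_mul transpose_mat transpose_transpose matrix_mul_assoc matrix_mul_lid matrix_mul_rid)
  moreover have right_inv: "transpose A ** (A ** N) = mat 1"
    using GN by (simp add: G_def matrix_mul_assoc)
  ultimately have "mp_pinv (transpose A) = A ** N"
    by (intro mp_pinv_eqI) (simp_all add: matrix_mul_assoc[symmetric] matrix_transpose_mul)
  with right_inv show ?thesis by simp
qed

definition ln_vec :: "real^'n \<Rightarrow> real^'n" where
  "ln_vec v = (\<chi> j. ln (v $ j))"

lemma vpow_eq_exp_inner: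
  assumes "pos_vec c"
  shows "vpow c a = exp (a \<bullet> ln_vec c)"
proof -
  have "c $ i \<noteq> 0" for i using assms by (simp add: pos_vec_def less_imp_neq[symmetric])
  then show ?thesis
    unfolding vpow_def ln_vec_def inner_vec_def by (simp add: powr_def exp_sum mult.commute)
qed

lemma S_class_rescale_to_ones:
  assumes "F \<in> S_class A \<beta> \<epsilon>" and "pos_vec v" and "transpose A *v w = ln_vec v"
  shows "\<bar>F (\<chi> i. 1) * exp (\<beta> \<bullet> w) - F v\<bar> \<le> \<epsilon> * \<bar>F v\<bar>"
proof -
  define c where "c = (\<chi> i. exp (- w $ i))"
  have c: "pos_vec c" "ln_vec c = - w"
    unfolding c_def pos_vec_def ln_vec_def by (auto simp: vec_eq_iff)
  have "(\<chi> i. A $ i $ j) \<bullet> w = ln (v $ j)" for j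
    using arg_cong[OF assms(3), of "\<lambda>u. u $ j"]
    by (simp add: inner_vec_def matrix_vector_mult_def transpose_def ln_vec_def mult.commute)
  then have "v $ j * vpow c (\<chi> i. A $ i $ j) = 1" for j
    using assms(2) unfolding pos_vec_def
    by (simp add: vpow_eq_exp_inner[OF c(1)] c(2) exp_minus less_imp_neq[symmetric])
  then have ones: "(\<chi> j. v $ j * vpow c (\<chi> i. A $ i $ j)) = (\<chi> i. 1)"
    by (simp add: vec_eq_iff)
  have "\<bar>F (\<chi> i. 1) - F v * exp (- (\<beta> \<bullet> w))\<bar> \<le> \<epsilon> * \<bar>F v\<bar> * exp (- (\<beta> \<bullet> w))"
    using assms(1,2) c unfolding S_class_def
    by (auto simp flip: ones dest!: spec[of _ v] spec[of _ c] simp: vpow_eq_exp_inner)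
  then have "\<bar>F (\<chi> i. 1) - F v * exp (- (\<beta> \<bullet> w))\<bar> * exp (\<beta> \<bullet> w) \<le> \<epsilon> * \<bar>F v\<bar>"
    by (simp add: exp_minus field_simps)
  then show ?thesis
    by (simp add: abs_mult[symmetric] exp_minus field_simps)
qed

lemma vpow_eq_exp_inner_mult:
  assumes "pos_vec v" and "transpose A *v w = ln_vec v"
  shows "vpow v y = exp ((A *v y) \<bullet> w)"
proof -
  have "y \<bullet> ln_vec v = (A *v y) \<bullet> w"
    unfolding assms(2)[symmetric] by (metis transpose_matrix_vector inner_commute dot_lmul_matrix)
  then show ?thesis by (simp add: vpow_eq_exp_inner[OF assms(1)])
qed

lemma abs_one_minus_exp_le: "\<bar>1 - exp t\<bar> \<le> exp \<bar>t\<bar> - (1::real)"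
proof (cases "t \<ge> 0")
  case False
  then have "exp t \<le> 1" by simp
  moreover have "2 * exp t \<le> 1 + exp t * exp t"
    using zero_le_square[of "1 - exp t"] by (simp add: algebra_simps power2_eq_square)
  ultimately show ?thesis using False by (simp add: exp_minus field_simps)
qed simp

lemma abs_sub_mult_exp_le:
  fixes a C b t s \<epsilon> :: real
  assumes rescale: "\<bar>C * exp b - a\<bar> \<le> \<epsilon> * \<bar>a\<bar>" and near: "\<bar>b - t\<bar> \<le> s"
  shows "\<bar>a - C * exp t\<bar> \<le> \<bar>a\<bar> * ((1 + \<epsilon>) * exp s - 1)"
proof -
  have C: "\<bar>C\<bar> * exp b \<le> (1 + \<epsilon>) * \<bar>a\<bar>"
    using rescale by (simp add: abs_mult algebra_simps)
  have "\<bar>exp b - exp t\<bar> = exp b * \<bar>1 - exp (t - b)\<bar>"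
    by (simp add: exp_diff flip: abs_mult) (simp add: field_simps)
  also have "\<dots> \<le> exp b * (exp s - 1)"
  proof (intro mult_left_mono)
    have "exp \<bar>t - b\<bar> \<le> exp s" using near by (simp add: abs_minus_commute)
    then show "\<bar>1 - exp (t - b)\<bar> \<le> exp s - 1" using abs_one_minus_exp_le[of "t - b"] by linarith
  qed simp
  finally have E: "\<bar>exp b - exp t\<bar> \<le> exp b * (exp s - 1)" .
  have s: "exp s - 1 \<ge> 0" using near by simp
  have "\<bar>a - C * exp t\<bar> \<le> \<bar>C * exp b - a\<bar> + \<bar>C\<bar> * \<bar>exp b - exp t\<bar>"
    by (simp add: abs_mult[symmetric] right_diff_distrib)
  also have "\<dots> \<le> \<epsilon> * \<bar>a\<bar> + (1 + \<epsilon>) * \<bar>a\<bar> * (exp s - 1)"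
    using rescale mult_left_mono[OF E abs_ge_zero[of C]] mult_right_mono[OF C s]
    by (simp add: mult.assoc)
  also have "\<dots> = \<bar>a\<bar> * ((1 + \<epsilon>) * exp s - 1)" by (simp add: algebra_simps)
  finally show ?thesis .
qed

lemma abs_nth_le_max_norm: "\<bar>x $ i\<bar> \<le> max_norm x"
  unfolding max_norm_def by (rule Max_ge) auto

lemma abs_matrix_vector_mult_nth_le:
  fixes B :: "real^'n^'m"
  assumes "\<And>j. \<bar>x $ j\<bar> \<le> b"
  shows "\<bar>(B *v x) $ i\<bar> \<le> row_sum_norm B * b"
proof -
  have "b \<ge> 0" using assms order_trans abs_ge_zero by blast
  have "\<bar>(B *v x) $ i\<bar> \<le> (\<Sum>j\<in>UNIV. \<bar>B $ i $ j\<bar> * b)"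
    unfolding matrix_vector_mult_def vec_lambda_beta
    by (rule order_trans[OF sum_abs]) (auto intro!: sum_mono mult_left_mono assms simp: abs_mult)
  also have "\<dots> \<le> row_sum_norm B * b"
    unfolding row_sum_norm_def sum_distrib_right[symmetric]
    by (intro mult_right_mono Max_ge \<open>b \<ge> 0\<close>) auto
  finally show ?thesis .
qed

lemma abs_inner_le_card_mult:
  fixes x w :: "real^'m"
  assumes "\<And>i. \<bar>x $ i\<bar> \<le> a" and "\<And>i. \<bar>w $ i\<bar> \<le> b"
  shows "\<bar>x \<bullet> w\<bar> \<le> real CARD('m) * a * b"
proof -
  have "\<bar>x $ i\<bar> * \<bar>w $ i\<bar> \<le> a * b" for i
    using assms by (intro mult_mono) (auto intro: order_trans[OF abs_ge_zero])
  then have "(\<Sum>i\<in>UNIV. \<bar>x $ i * w $ i\<bar>) \<le> (\<Sum>i\<in>(UNIV::'m set). a * b)"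
    by (intro sum_mono) (simp add: abs_mult)
  then show ?thesis
    unfolding inner_vec_def by (intro order_trans[OF sum_abs]) (simp add: mult.assoc)
qed

lemma abs_ln_le_ln_of_bounds:
  fixes t K :: real
  assumes "inverse K \<le> t" "t \<le> K" "0 < t"
  shows "\<bar>ln t\<bar> \<le> ln K"
proof -
  have "0 < K" using assms by simp
  then have "ln t \<le> ln K" and "ln (inverse K) \<le> ln t" using assms by simp_all
  then show ?thesis by (simp add: abs_le_iff ln_inverse)
qed

theorem theorem3p1:
  fixes A :: "real^'n^'m" and \<beta> :: "real^'m" and \<epsilon> \<delta> K :: real
    and F :: "real^'n \<Rightarrow> real" and y :: "real^'n"
  assumes "rank A = CARD('n)"
    and "\<epsilon> \<ge> 0"
    and "F \<in> S_class A \<beta> \<epsilon>"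
    and "\<delta> \<ge> 0"
    and "max_norm (A *v y - \<beta>) \<le> \<delta>"
    and "K > 1"
  shows "\<forall>v. pos_vec v \<longrightarrow> (\<forall>i. inverse K \<le> v $ i \<and> v $ i \<le> K) \<longrightarrow>
           \<bar>F v - F (\<chi> i. 1) * vpow v y\<bar>
             \<le> \<bar>F v\<bar> * ((1 + \<epsilon>) * K powr (real CARD('m) * \<delta> * row_sum_norm (mp_pinv (transpose A))) - 1)"
proof (intro allI impI)
  fix v :: "real^'n"
  assume v: "pos_vec v" and box: "\<forall>i. inverse K \<le> v $ i \<and> v $ i \<le> K"
  define D where "D = mp_pinv (transpose A)"
  define w where "w = D *v ln_vec v"
  have w: "transpose A *v w = ln_vec v"
    using mp_pinv_transpose_right_inverse[OF assms(1)]
    by (simp add: w_def D_def matrix_vector_mul_assoc)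
  have "\<bar>ln_vec v $ j\<bar> \<le> ln K" for j
    using box v by (simp add: ln_vec_def pos_vec_def abs_ln_le_ln_of_bounds)
  then have "\<bar>w $ i\<bar> \<le> row_sum_norm D * ln K" for i
    unfolding w_def by (rule abs_matrix_vector_mult_nth_le)
  moreover have "\<bar>(\<beta> - A *v y) $ i\<bar> \<le> \<delta>" for i
    using abs_nth_le_max_norm[of "A *v y - \<beta>" i] assms(5) by simp
  ultimately have "\<bar>\<beta> \<bullet> w - (A *v y) \<bullet> w\<bar> \<le> real CARD('m) * \<delta> * row_sum_norm D * ln K"
    using abs_inner_le_card_mult[of "\<beta> - A *v y" \<delta> w] by (simp add: inner_diff_left mult.assoc)
  from abs_sub_mult_exp_le[OF S_class_rescale_to_ones[OF assms(3) v w] this]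
  show "\<bar>F v - F (\<chi> i. 1) * vpow v y\<bar>
          \<le> \<bar>F v\<bar> * ((1 + \<epsilon>) * K powr (real CARD('m) * \<delta> * row_sum_norm (mp_pinv (transpose A))) - 1)"
    using assms(6) by (simp add: vpow_eq_exp_inner_mult[OF v w] powr_def D_def)
qed

end
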